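(* Let $k\ge1$, let $\alpha_1,\dots,\alpha_k>-1$ and $\beta_1,\dots,\beta_k$ be real, and put $\gamma_j=\alpha_{j+1}+\alpha_{j+2}+\dots+\alpha_k+\beta_j+\beta_{j+1}+\dots+\beta_k+(k-j)$ for $j=1,\dots,k$; assume $\gamma_j>0$ for all $j$. Let $(x_1,\dots,x_k)$ have the joint density $$f_1(x_1,\dots,x_k)=C_1\,x_1^{\alpha_1}(1-x_1)^{\beta_1}x_2^{\alpha_2}(1-x_1-x_2)^{\beta_2}\cdots x_k^{\alpha_k}(1-x_1-\dots-x_k)^{\beta_k-1}$$ on $\{x_j>0,\ 0<x_1+\dots+x_j<1,\ j=1,\dots,k\}$ and $0$ elsewhere, where $C_1$ is the normalizing constant. Let $(v_1,\dots,v_k)$ be a vector of positive real random variables with an arbitrary joint density $f(v_1,\dots,v_k)$ on $(0,\infty)^k$, independent of $(x_1,\dots,x_k)$. Let $$u_j=v_j\,\frac{x_j}{1-x_1-\dots-x_{j-1}},\quad j=1,\dots,k$$ (for $j=1$ the denominator is $1$), and let $g(u_1,\dots,u_k)$ be the joint density of $(u_1,\dots,u_k)$. Then, for (almost every) $(u_1,\dots,u_k)\in(0,\infty)^k$, $$\Big\{\prod_{j=1}^k\frac{\Gamma(\alpha_j+1)}{\Gamma(\alpha_j+\gamma_j+1)}\Big\}g(u_1,\dots,u_k)=K_{u_j,j=1,\dots,k}^{(\alpha_j,\gamma_j),j=1,\dots,k}f(u_1,\dots,u_k).$$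
   Context: The multivariable Kober fractional integral operator of the second kind is defined, for parameters $\zeta_j$ and $\alpha_j>0$, by $$K_{u_j,j=1,\dots,k}^{(\zeta_j,\alpha_j),j=1,\dots,k}f(u_1,\dots,u_k)=\Big\{\prod_{j=1}^k\frac{u_j^{\zeta_j}}{\Gamma(\alpha_j)}\Big\}\int_{v_1>u_1}\cdots\int_{v_k>u_k}\Big\{\prod_{j=1}^k(v_j-u_j)^{\alpha_j-1}v_j^{-\zeta_j-\alpha_j}\Big\}f(v_1,\dots,v_k)\,dv_1\cdots dv_k;$$ here it is applied with $\zeta_j=\alpha_j$ and $\alpha_j$ replaced by $\gamma_j$. *)

theory Defs
  imports "HOL-Analysis.Analysis"
begin

text \<open>Vectors (x_1,...,x_k) are functions nat => real restricted to the index set {1..k};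
  the k-dimensional Lebesgue measure is the product measure below.\<close>

abbreviation lebk :: "nat \<Rightarrow> (nat \<Rightarrow> real) measure" where
  "lebk k \<equiv> PiM {1..k} (\<lambda>_. lborel)"

definition gam :: "nat \<Rightarrow> (nat \<Rightarrow> real) \<Rightarrow> (nat \<Rightarrow> real) \<Rightarrow> nat \<Rightarrow> real" where
  "gam k \<alpha> \<beta> j = (\<Sum>i\<in>{j+1..k}. \<alpha> i) + (\<Sum>i\<in>{j..k}. \<beta> i) + real (k - j)"

definition simplex_region :: "nat \<Rightarrow> (nat \<Rightarrow> real) set" where
  "simplex_region k = {x. \<forall>j\<in>{1..k}. x j > 0 \<and> 0 < (\<Sum>i\<in>{1..j}. x i) \<and> (\<Sum>i\<in>{1..j}. x i) < 1}"

definition f1_unnorm :: "nat \<Rightarrow> (nat \<Rightarrow> real) \<Rightarrow> (nat \<Rightarrow> real) \<Rightarrow> (nat \<Rightarrow> real) \<Rightarrow> real" where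
  "f1_unnorm k \<alpha> \<beta> x =
     (if x \<in> simplex_region k then
        (\<Prod>j\<in>{1..k}. x j powr \<alpha> j *
            (1 - (\<Sum>i\<in>{1..j}. x i)) powr (if j = k then \<beta> j - 1 else \<beta> j))
      else 0)"

definition C1 :: "nat \<Rightarrow> (nat \<Rightarrow> real) \<Rightarrow> (nat \<Rightarrow> real) \<Rightarrow> real" where
  "C1 k \<alpha> \<beta> = 1 / (\<integral>x. f1_unnorm k \<alpha> \<beta> x \<partial>lebk k)"

definition f1_dens :: "nat \<Rightarrow> (nat \<Rightarrow> real) \<Rightarrow> (nat \<Rightarrow> real) \<Rightarrow> (nat \<Rightarrow> real) \<Rightarrow> real" where
  "f1_dens k \<alpha> \<beta> x = C1 k \<alpha> \<beta> * f1_unnorm k \<alpha> \<beta> x"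

definition u_map :: "nat \<Rightarrow> (nat \<Rightarrow> real) \<times> (nat \<Rightarrow> real) \<Rightarrow> (nat \<Rightarrow> real)" where
  "u_map k xv = (\<lambda>j\<in>{1..k}. snd xv j * fst xv j / (1 - (\<Sum>i\<in>{1..<j}. fst xv i)))"

definition kober2 :: "nat \<Rightarrow> (nat \<Rightarrow> real) \<Rightarrow> (nat \<Rightarrow> real) \<Rightarrow> ((nat \<Rightarrow> real) \<Rightarrow> real)
                      \<Rightarrow> (nat \<Rightarrow> real) \<Rightarrow> real" where
  "kober2 k \<zeta> a f u =
     (\<Prod>j\<in>{1..k}. u j powr \<zeta> j / Gamma (a j)) *
     (\<integral>v. indicator {v. \<forall>j\<in>{1..k}. v j > u j} v *
          (\<Prod>j\<in>{1..k}. (v j - u j) powr (a j - 1) * v j powr (- \<zeta> j - a j)) * f v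
        \<partial>lebk k)"

definition pos_orthant :: "nat \<Rightarrow> (nat \<Rightarrow> real) set" where
  "pos_orthant k = {v. \<forall>j\<in>{1..k}. v j > 0}"

end

theory Submission
  imports Defs
begin

text \<open>For fixed v the map x \<mapsto> u is a change of variables from the support of f_1 onto the
  box of all u with 0 < u_j < v_j. Integrating out x_k, x_{k-1}, ..., x_1 in turn, with the
  substitution x_j = (1 - x_1 - ... - x_{j-1}) u_j / v_j, each step contributes a factor
  (1 - x_1 - ... - x_{j-1}) to a power that is added to the exponent of the previous factor;
  this accumulation is exactly gamma_j. Hence, given v, the u_j / v_j are independent
  Beta(alpha_j + 1, gamma_j) variables, so g(u) = C_1 \<integral> f(v) \<Prod>_j (u_j / v_j)^alpha_j
  (1 - u_j / v_j)^(gamma_j - 1) / v_j dv over v_j > u_j, which is the Kober operator up to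
  constants. Taking v = 1 in the same computation gives C_1 = \<Prod>_j 1 / B(alpha_j + 1, gamma_j).\<close>

section \<open>Measurability\<close>

lemma lebk_component_measurable: "j \<in> {1..n} \<Longrightarrow> (\<lambda>x. x j) \<in> borel_measurable (lebk n)"
  by (simp add: measurable_component_singleton)

lemma partial_sum_lessThan_measurable[measurable]:
  "j \<le> Suc n \<Longrightarrow> (\<lambda>x. \<Sum>i\<in>{1..<j}. x i) \<in> borel_measurable (lebk n)"
  by (intro borel_measurable_sum lebk_component_measurable) auto

lemma partial_sum_atMost_measurable[measurable]:
  "j \<le> n \<Longrightarrow> (\<lambda>x. \<Sum>i\<in>{1..j}. x i) \<in> borel_measurable (lebk n)"
  by (intro borel_measurable_sum lebk_component_measurable) auto

lemma pred_simplex_region[measurable]: "Measurable.pred (lebk n) (\<lambda>x. x \<in> simplex_region n)"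
  unfolding simplex_region_def mem_Collect_eq
  by (intro pred_intros_finite pred_intros_logic) (simp, measurable)

lemma measurable_u_map_fixed_v[measurable]: "(\<lambda>x. u_map n (x, v)) \<in> measurable (lebk n) (lebk n)"
  unfolding u_map_def fst_conv snd_conv
  by (intro measurable_restrict, simp only: measurable_lborel1)
     (intro borel_measurable_divide borel_measurable_times borel_measurable_const
        lebk_component_measurable borel_measurable_diff partial_sum_lessThan_measurable; auto)

lemma lebk_pair_component_measurable:
  assumes "j \<in> {1..n}"
  shows "(\<lambda>p. fst p j) \<in> borel_measurable (lebk n \<Otimes>\<^sub>M lebk n)"
    and "(\<lambda>p. snd p j) \<in> borel_measurable (lebk n \<Otimes>\<^sub>M lebk n)"
  using measurable_compose[OF measurable_fst lebk_component_measurable[OF assms]]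
    measurable_compose[OF measurable_snd lebk_component_measurable[OF assms]]
  by (auto simp: comp_def)

lemma measurable_u_map[measurable]: "u_map n \<in> measurable (lebk n \<Otimes>\<^sub>M lebk n) (lebk n)"
  unfolding u_map_def
  by (intro measurable_restrict, simp only: measurable_lborel1)
     (intro borel_measurable_divide borel_measurable_times borel_measurable_diff
        borel_measurable_const borel_measurable_sum lebk_pair_component_measurable; auto)

section \<open>Integrating out the simplex one coordinate at a time\<close>

text \<open>f1_unnorm with an arbitrary exponent e_j on every factor 1 - x_1 - ... - x_j, so that the
  exponents can absorb the factors produced by integrating out later coordinates.\<close>

definition simplex_weight :: "nat \<Rightarrow> (nat \<Rightarrow> real) \<Rightarrow> (nat \<Rightarrow> real) \<Rightarrow> (nat \<Rightarrow> real) \<Rightarrow> real" where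
  "simplex_weight n a e x =
     (if x \<in> simplex_region n
      then \<Prod>j\<in>{1..n}. x j powr a j * (1 - (\<Sum>i\<in>{1..j}. x i)) powr e j else 0)"

text \<open>The Beta(p+1, q+1) weight transported from ]0,1[ to ]0,c[; it is the law (up to
  normalisation) of c times a Beta variable, which is how each u_j arises from v_j.\<close>

definition beta_kernel :: "real \<Rightarrow> real \<Rightarrow> real \<Rightarrow> real \<Rightarrow> real" where
  "beta_kernel p q c r = (if 0 < r \<and> r < c then (r / c) powr p * (1 - r / c) powr q / c else 0)"

lemma simplex_weight_nonneg: "simplex_weight n a e x \<ge> 0"
  unfolding simplex_weight_def by (auto intro!: prod_nonneg)

lemma simplex_weight_measurable[measurable]: "simplex_weight n a e \<in> borel_measurable (lebk n)"
proof -
  have "Measurable.pred (lebk n) (\<lambda>x. x \<in> simplex_region n)" by measurable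
  then show ?thesis
    unfolding simplex_weight_def
    by (intro measurable_If borel_measurable_prod borel_measurable_times powr_real_measurable
        partial_sum_atMost_measurable lebk_component_measurable borel_measurable_diff
        borel_measurable_const) (auto simp: pred_def)
qed

lemma beta_kernel_nonneg: "beta_kernel p q c r \<ge> 0"
  unfolding beta_kernel_def by auto

lemma beta_kernel_measurable[measurable]: "(\<lambda>r. beta_kernel p q c r) \<in> borel_measurable borel"
  unfolding beta_kernel_def by measurable

lemma beta_kernel_measurable_pair[measurable]:
  "(\<lambda>z. beta_kernel p q (f z) (g z)) \<in> borel_measurable M"
  if "f \<in> borel_measurable M" "g \<in> borel_measurable M"
  using that unfolding beta_kernel_def by measurable

lemma u_map_fun_upd:
  "u_map (Suc m) (x(Suc m := t), v) =
     (u_map m (x, v))(Suc m := v (Suc m) * t / (1 - (\<Sum>i\<in>{1..m}. x i)))"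
proof
  fix j
  have "(\<Sum>i\<in>{1..<j}. (x(Suc m := t)) i) = (\<Sum>i\<in>{1..<j}. x i)" if "j \<le> Suc m"
    using that by (intro sum.cong) auto
  then show "u_map (Suc m) (x(Suc m := t), v) j =
      ((u_map m (x, v))(Suc m := v (Suc m) * t / (1 - (\<Sum>i\<in>{1..m}. x i)))) j"
    by (cases "j = Suc m") (auto simp: u_map_def atLeastLessThanSuc_atLeastAtMost)
qed

lemma partial_sum_fun_upd:
  "j \<le> m \<Longrightarrow> (\<Sum>i\<in>{1..j}. (x(Suc m := t)) i) = (\<Sum>i\<in>{1..j}. x i)"
  by (intro sum.cong) auto

lemma simplex_region_fun_upd:
  "x(Suc m := t) \<in> simplex_region (Suc m) \<longleftrightarrow>
     x \<in> simplex_region m \<and> 0 < t \<and> (\<Sum>i\<in>{1..m}. x i) + t < 1"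
proof -
  have last: "(\<Sum>i\<in>{1..Suc m}. (x(Suc m := t)) i) = (\<Sum>i\<in>{1..m}. x i) + t"
    by (simp add: partial_sum_fun_upd)
  have "(\<Sum>i\<in>{1..m}. x i) \<ge> 0" if "x \<in> simplex_region m"
    using that unfolding simplex_region_def by (intro sum_nonneg) (auto simp: less_imp_le)
  moreover have "{1..Suc m} = insert (Suc m) {1..m}" by auto
  ultimately show ?thesis
    unfolding simplex_region_def using last by (auto simp: partial_sum_fun_upd)
qed

lemma simplex_weight_fun_upd:
  "simplex_weight (Suc m) a e (x(Suc m := t)) = simplex_weight m a e x *
     (if 0 < t \<and> (\<Sum>i\<in>{1..m}. x i) + t < 1
      then t powr a (Suc m) * (1 - (\<Sum>i\<in>{1..m}. x i) - t) powr e (Suc m) else 0)"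
proof -
  have "(\<Prod>j\<in>{1..m}. (x(Suc m := t)) j powr a j * (1 - (\<Sum>i\<in>{1..j}. (x(Suc m := t)) i)) powr e j)
      = (\<Prod>j\<in>{1..m}. x j powr a j * (1 - (\<Sum>i\<in>{1..j}. x i)) powr e j)"
    by (intro prod.cong) (auto simp: partial_sum_fun_upd)
  then show ?thesis
    unfolding simplex_weight_def simplex_region_fun_upd
    by (auto simp: prod.nat_ivl_Suc' partial_sum_fun_upd diff_diff_eq)
qed

lemma simplex_weight_add_last_exponent:
  "simplex_weight m a (e(m := e m + c)) x = simplex_weight m a e x * (1 - (\<Sum>i\<in>{1..m}. x i)) powr c"
proof (cases m)
  case (Suc n)
  have "(\<Prod>j\<in>{1..n}. x j powr a j * (1 - (\<Sum>i\<in>{1..j}. x i)) powr (e(Suc n := e (Suc n) + c)) j)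
      = (\<Prod>j\<in>{1..n}. x j powr a j * (1 - (\<Sum>i\<in>{1..j}. x i)) powr e j)"
    by (intro prod.cong) auto
  then show ?thesis
    unfolding simplex_weight_def Suc by (auto simp: prod.nat_ivl_Suc' powr_add)
qed (simp add: simplex_weight_def)

lemma gam_last: "gam n a e n = e n"
  unfolding gam_def by simp

lemma gam_add_last_exponent:
  assumes "j \<in> {1..m}"
  shows "gam m a (e(m := e m + (a (Suc m) + e (Suc m) + 1))) j = gam (Suc m) a e j"
proof -
  have "(\<Sum>i\<in>{j..m}. (e(m := e m + (a (Suc m) + e (Suc m) + 1))) i)
        = (\<Sum>i\<in>{j..m}. e i + (if i = m then a (Suc m) + e (Suc m) + 1 else 0))"
    by (intro sum.cong) auto
  then show ?thesis
    using assms by (simp add: gam_def sum.distrib Suc_diff_le)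
qed

lemma gam_decrease_last_exponent:
  "j \<in> {1..k} \<Longrightarrow> gam k a (e(k := e k - 1)) j = gam k a e j - 1"
proof -
  assume j: "j \<in> {1..k}"
  have "(\<Sum>i\<in>{j..k}. (e(k := e k - 1)) i) = (\<Sum>i\<in>{j..k}. e i - (if i = k then 1 else 0))"
    by (intro sum.cong) auto
  then show ?thesis
    using j by (simp add: gam_def sum_subtractf)
qed

lemma f1_unnorm_eq_simplex_weight: "f1_unnorm k \<alpha> \<beta> = simplex_weight k \<alpha> (\<beta>(k := \<beta> k - 1))"
  by (rule ext) (auto simp: f1_unnorm_def simplex_weight_def intro!: prod.cong)

lemma beta_kernel_rescale:
  fixes s c r :: real
  assumes s: "0 \<le> s" "s < 1" and c: "c > 0"
  defines "t \<equiv> (1 - s) / c * r"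
  shows "(1 - s) / c * (if 0 < t \<and> s + t < 1 then t powr p * (1 - s - t) powr q else 0)
       = (1 - s) powr (p + q + 1) * beta_kernel p q c r"
proof -
  have t: "t = (1 - s) * (r / c)" and rest: "1 - s - t = (1 - s) * (1 - r / c)"
    using c by (simp_all add: t_def field_simps)
  have "0 < t \<longleftrightarrow> 0 < r"
    using s c unfolding t by (simp add: zero_less_mult_iff zero_less_divide_iff)
  moreover have "s + t < 1 \<longleftrightarrow> 0 < (1 - s) * (1 - r / c)"
    unfolding rest[symmetric] by linarith
  then have "s + t < 1 \<longleftrightarrow> r < c"
    using s c by (simp add: zero_less_mult_iff)
  moreover have "(1 - s) / c * (t powr p * (1 - s - t) powr q)
      = (1 - s) powr (p + q + 1) * ((r / c) powr p * (1 - r / c) powr q / c)"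
    if "0 < r" "r < c"
  proof -
    have "t powr p = (1 - s) powr p * (r / c) powr p"
      unfolding t using powr_mult[of "1 - s" "r / c" p] s c that by simp
    moreover have "(1 - s - t) powr q = (1 - s) powr q * (1 - r / c) powr q"
      unfolding rest using powr_mult[of "1 - s" "1 - r / c" q] s c that by simp
    ultimately have "t powr p * (1 - s - t) powr q = (1 - s) powr (p + q) * ((r / c) powr p * (1 - r / c) powr q)"
      using s by (simp add: powr_add)
    moreover have "(1 - s) powr (p + q + 1) = (1 - s) powr (p + q) * (1 - s)"
      using s by (simp add: powr_add)
    ultimately show ?thesis by simp
  qed
  ultimately show ?thesis
    unfolding beta_kernel_def by auto
qed

lemma nn_integral_beta_rescale:
  fixes h :: "real \<Rightarrow> ennreal"
  assumes s: "0 \<le> s" "s < 1" and c: "c > 0" and h[measurable]: "h \<in> borel_measurable borel"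
  shows "(\<integral>\<^sup>+t. h (c * t / (1 - s)) *
            ennreal (if 0 < t \<and> s + t < 1 then t powr p * (1 - s - t) powr q else 0) \<partial>lborel)
       = ennreal ((1 - s) powr (p + q + 1)) * (\<integral>\<^sup>+r. h r * ennreal (beta_kernel p q c r) \<partial>lborel)"
proof -
  define d where "d = (1 - s) / c"
  have d: "d > 0" using s c by (simp add: d_def)
  let ?w = "\<lambda>t. if 0 < t \<and> s + t < 1 then t powr p * (1 - s - t) powr q else 0"
  have "(\<integral>\<^sup>+t. h (c * t / (1 - s)) * ennreal (?w t) \<partial>lborel)
      = ennreal \<bar>d\<bar> * (\<integral>\<^sup>+r. h (c * (0 + d * r) / (1 - s)) * ennreal (?w (0 + d * r)) \<partial>lborel)"
    by (rule nn_integral_real_affine) (use d in auto)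
  also have "\<dots> = (\<integral>\<^sup>+r. ennreal ((1 - s) powr (p + q + 1)) * (h r * ennreal (beta_kernel p q c r)) \<partial>lborel)"
  proof (subst nn_integral_cmult[symmetric], measurable, intro nn_integral_cong)
    fix r
    have arg: "c * (d * r) / (1 - s) = r" using s c by (simp add: d_def)
    have "d * ?w (d * r) = (1 - s) powr (p + q + 1) * beta_kernel p q c r"
      unfolding d_def by (rule beta_kernel_rescale[OF s c])
    then have w: "ennreal d * ennreal (?w (d * r))
        = ennreal ((1 - s) powr (p + q + 1)) * ennreal (beta_kernel p q c r)"
      by (simp only: ennreal_mult'[symmetric] less_imp_le[OF d] powr_ge_zero)
    have "ennreal \<bar>d\<bar> * (h (c * (0 + d * r) / (1 - s)) * ennreal (?w (0 + d * r)))
        = h r * (ennreal d * ennreal (?w (d * r)))"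
      unfolding add_0_left arg abs_of_pos[OF d] by (rule mult.left_commute)
    also have "\<dots> = ennreal ((1 - s) powr (p + q + 1)) * (h r * ennreal (beta_kernel p q c r))"
      unfolding w by (rule mult.left_commute)
    finally show "ennreal \<bar>d\<bar> * (h (c * (0 + d * r) / (1 - s)) * ennreal (?w (0 + d * r)))
        = ennreal ((1 - s) powr (p + q + 1)) * (h r * ennreal (beta_kernel p q c r))" .
  qed
  also have "\<dots> = ennreal ((1 - s) powr (p + q + 1)) * (\<integral>\<^sup>+r. h r * ennreal (beta_kernel p q c r) \<partial>lborel)"
    by (rule nn_integral_cmult) measurable
  finally show ?thesis .
qed

lemma lebk_Suc: "lebk (Suc m) = PiM (insert (Suc m) {1..m}) (\<lambda>_. lborel)"
  by (rule arg_cong[where f = "\<lambda>I. PiM I (\<lambda>_. lborel)"]) auto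

lemma nn_integral_lebk_Suc:
  assumes "h \<in> borel_measurable (lebk (Suc m))"
  shows "(\<integral>\<^sup>+x. h x \<partial>lebk (Suc m)) = (\<integral>\<^sup>+x. \<integral>\<^sup>+t. h (x(Suc m := t)) \<partial>lborel \<partial>lebk m)"
proof -
  interpret product_sigma_finite "\<lambda>_::nat. lborel::real measure" by standard
  show ?thesis
    using assms unfolding lebk_Suc by (intro product_nn_integral_insert) auto
qed

lemma measurable_fun_upd_last:
  assumes "w \<in> space (lebk m)" and "h \<in> borel_measurable (lebk (Suc m))"
  shows "(\<lambda>r. h (w(Suc m := r))) \<in> borel_measurable borel"
  using measurable_compose[OF measurable_component_update[OF assms(1), of "Suc m"]
      assms(2)[unfolded lebk_Suc]]
  by simp

lemma u_map_in_space: "u_map m xv \<in> space (lebk m)"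
  by (simp add: u_map_def space_PiM)

lemma nn_integral_last_coordinate:
  fixes h :: "(nat \<Rightarrow> real) \<Rightarrow> ennreal"
  assumes v: "v (Suc m) > 0" and h: "h \<in> borel_measurable (lebk (Suc m))"
  shows "(\<integral>\<^sup>+t. h (u_map (Suc m) (x(Suc m := t), v)) *
              ennreal (simplex_weight (Suc m) a e (x(Suc m := t))) \<partial>lborel)
    = (\<integral>\<^sup>+r. h ((u_map m (x, v))(Suc m := r)) *
              ennreal (beta_kernel (a (Suc m)) (e (Suc m)) (v (Suc m)) r) \<partial>lborel) *
      ennreal (simplex_weight m a (e(m := e m + (a (Suc m) + e (Suc m) + 1))) x)"
proof -
  define s where "s = (\<Sum>i\<in>{1..m}. x i)"
  define w where "w = u_map m (x, v)"
  define F where "F = simplex_weight m a e x"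
  let ?w = "\<lambda>t. if 0 < t \<and> s + t < 1 then t powr a (Suc m) * (1 - s - t) powr e (Suc m) else 0"
  have hw[measurable]: "(\<lambda>r. h (w(Suc m := r))) \<in> borel_measurable borel"
    unfolding w_def by (rule measurable_fun_upd_last[OF u_map_in_space h])
  have F: "F \<ge> 0" unfolding F_def by (rule simplex_weight_nonneg)
  have lhs: "(\<integral>\<^sup>+t. h (u_map (Suc m) (x(Suc m := t), v)) *
              ennreal (simplex_weight (Suc m) a e (x(Suc m := t))) \<partial>lborel)
      = (\<integral>\<^sup>+t. ennreal F * (h (w(Suc m := v (Suc m) * t / (1 - s))) * ennreal (?w t)) \<partial>lborel)"
    unfolding u_map_fun_upd simplex_weight_fun_upd w_def s_def F_def
    by (intro nn_integral_cong) (simp only: ennreal_mult'[OF simplex_weight_nonneg] mult_ac)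
  show ?thesis
  proof (cases "F = 0")
    case True
    then show ?thesis
      unfolding lhs using simplex_weight_add_last_exponent[of m a e _ x] by (simp add: F_def)
  next
    case False
    then have x: "x \<in> simplex_region m" unfolding F_def simplex_weight_def by presburger
    have "0 \<le> s"
      using x unfolding s_def simplex_region_def by (intro sum_nonneg) (auto simp: less_imp_le)
    moreover have "s < 1"
    proof (cases "m = 0")
      case False
      then have "m \<in> {1..m}" by simp
      then show ?thesis using x unfolding s_def simplex_region_def by blast
    qed (simp add: s_def)
    ultimately have "(\<integral>\<^sup>+t. ennreal F * (h (w(Suc m := v (Suc m) * t / (1 - s))) * ennreal (?w t)) \<partial>lborel)
        = ennreal F * (ennreal ((1 - s) powr (a (Suc m) + e (Suc m) + 1)) *
            (\<integral>\<^sup>+r. h (w(Suc m := r)) * ennreal (beta_kernel (a (Suc m)) (e (Suc m)) (v (Suc m)) r) \<partial>lborel))"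
      by (subst nn_integral_cmult, measurable) (subst nn_integral_beta_rescale; use v in simp)
    then show ?thesis
      unfolding lhs simplex_weight_add_last_exponent
      using F by (simp add: F_def s_def w_def ennreal_mult mult_ac)
  qed
qed

lemma prod_beta_kernel_measurable:
  "(\<lambda>u. \<Prod>j\<in>{1..n}. beta_kernel (a j) (E j) (v j) (u j)) \<in> borel_measurable (lebk n)"
  by (intro borel_measurable_prod measurable_compose[OF lebk_component_measurable beta_kernel_measurable])
    auto

lemma prod_beta_kernel_fun_upd:
  "(\<Prod>j\<in>{1..Suc m}. beta_kernel (a j) (gam (Suc m) a e j) (v j) ((u(Suc m := r)) j))
   = beta_kernel (a (Suc m)) (e (Suc m)) (v (Suc m)) r *
     (\<Prod>j\<in>{1..m}. beta_kernel (a j) (gam m a (e(m := e m + (a (Suc m) + e (Suc m) + 1))) j) (v j) (u j))"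
proof -
  have "(\<Prod>j\<in>{1..m}. beta_kernel (a j) (gam (Suc m) a e j) (v j) ((u(Suc m := r)) j))
      = (\<Prod>j\<in>{1..m}. beta_kernel (a j) (gam m a (e(m := e m + (a (Suc m) + e (Suc m) + 1))) j) (v j) (u j))"
    by (intro prod.cong) (auto simp: gam_add_last_exponent)
  then show ?thesis
    by (simp add: prod.nat_ivl_Suc' gam_last)
qed

text \<open>The factor (1 - x_1 - ... - x_{n-1}) ^ (a_n + e_n + 1) produced by integrating out x_n
  is absorbed into e_{n-1}, and this shift leaves the tail exponents gam unchanged.\<close>

lemma nn_integral_u_map_simplex_weight:
  fixes h :: "(nat \<Rightarrow> real) \<Rightarrow> ennreal"
  assumes "\<forall>j\<in>{1..n}. v j > 0" and "h \<in> borel_measurable (lebk n)"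
  shows "(\<integral>\<^sup>+x. h (u_map n (x, v)) * ennreal (simplex_weight n a e x) \<partial>lebk n)
       = (\<integral>\<^sup>+u. h u * ennreal (\<Prod>j\<in>{1..n}. beta_kernel (a j) (gam n a e j) (v j) (u j)) \<partial>lebk n)"
  using assms
proof (induction n arbitrary: e h)
  case 0
  then show ?case
    by (simp add: PiM_empty simplex_weight_def simplex_region_def u_map_def nn_integral_count_space_finite)
next
  case (Suc m)
  let ?e' = "e(m := e m + (a (Suc m) + e (Suc m) + 1))"
  let ?P = "\<lambda>u. \<Prod>j\<in>{1..m}. beta_kernel (a j) (gam m a ?e' j) (v j) (u j)"
  let ?Q = "\<lambda>u. \<Prod>j\<in>{1..Suc m}. beta_kernel (a j) (gam (Suc m) a e j) (v j) (u j)"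
  define hh where
    "hh w = (\<integral>\<^sup>+r. h (w(Suc m := r)) * ennreal (beta_kernel (a (Suc m)) (e (Suc m)) (v (Suc m)) r) \<partial>lborel)"
    for w
  have h: "h \<in> borel_measurable (PiM (insert (Suc m) {1..m}) (\<lambda>_. lborel))"
    using Suc.prems(2) by (simp only: lebk_Suc)
  have "hh \<in> borel_measurable (lebk m)"
    unfolding hh_def by (rule lborel.borel_measurable_nn_integral) (use h in measurable)
  note IH = Suc.IH[OF _ this]
  have "(\<lambda>x. h (u_map (Suc m) (x, v)) * ennreal (simplex_weight (Suc m) a e x))
      \<in> borel_measurable (lebk (Suc m))"
    using Suc.prems(2) by measurable
  from nn_integral_lebk_Suc[OF this]
  have "(\<integral>\<^sup>+x. h (u_map (Suc m) (x, v)) * ennreal (simplex_weight (Suc m) a e x) \<partial>lebk (Suc m))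
      = (\<integral>\<^sup>+x. \<integral>\<^sup>+t. h (u_map (Suc m) (x(Suc m := t), v)) *
            ennreal (simplex_weight (Suc m) a e (x(Suc m := t))) \<partial>lborel \<partial>lebk m)" .
  also have "\<dots> = (\<integral>\<^sup>+x. hh (u_map m (x, v)) * ennreal (simplex_weight m a ?e' x) \<partial>lebk m)"
    unfolding hh_def using Suc.prems by (intro nn_integral_cong nn_integral_last_coordinate) auto
  also have "\<dots> = (\<integral>\<^sup>+u. hh u * ennreal (?P u) \<partial>lebk m)"
    using Suc.prems by (intro IH) auto
  also have "\<dots> = (\<integral>\<^sup>+u. \<integral>\<^sup>+r. h (u(Suc m := r)) * ennreal (?Q (u(Suc m := r))) \<partial>lborel \<partial>lebk m)"
  proof (intro nn_integral_cong)
    fix u assume "u \<in> space (lebk m)"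
    then have [measurable]: "(\<lambda>r. h (u(Suc m := r))) \<in> borel_measurable borel"
      using Suc.prems(2) by (rule measurable_fun_upd_last)
    show "hh u * ennreal (?P u) = (\<integral>\<^sup>+r. h (u(Suc m := r)) * ennreal (?Q (u(Suc m := r))) \<partial>lborel)"
      unfolding hh_def prod_beta_kernel_fun_upd
      by (subst nn_integral_multc[symmetric], measurable)
         (simp add: ennreal_mult beta_kernel_nonneg prod_nonneg mult_ac)
  qed
  also have "\<dots> = (\<integral>\<^sup>+u. h u * ennreal (?Q u) \<partial>lebk (Suc m))"
  proof -
    have "(\<lambda>u. h u * ennreal (?Q u)) \<in> borel_measurable (lebk (Suc m))"
      using Suc.prems(2) prod_beta_kernel_measurable by measurable
    from nn_integral_lebk_Suc[OF this] show ?thesis by simp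
  qed
  finally show ?case .
qed

section \<open>The normalising constant\<close>

lemma f1_unnorm_measurable[measurable]: "f1_unnorm k \<alpha> \<beta> \<in> borel_measurable (lebk k)"
  unfolding f1_unnorm_eq_simplex_weight by (rule simplex_weight_measurable)

lemma f1_unnorm_nonneg: "f1_unnorm k \<alpha> \<beta> x \<ge> 0"
  unfolding f1_unnorm_eq_simplex_weight by (rule simplex_weight_nonneg)

lemma nn_integral_u_map_f1_unnorm:
  fixes h :: "(nat \<Rightarrow> real) \<Rightarrow> ennreal"
  assumes "v \<in> pos_orthant k" and "h \<in> borel_measurable (lebk k)"
  shows "(\<integral>\<^sup>+x. h (u_map k (x, v)) * ennreal (f1_unnorm k \<alpha> \<beta> x) \<partial>lebk k)
       = (\<integral>\<^sup>+u. h u * ennreal (\<Prod>j\<in>{1..k}. beta_kernel (\<alpha> j) (gam k \<alpha> \<beta> j - 1) (v j) (u j)) \<partial>lebk k)"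
proof -
  have "(\<Prod>j\<in>{1..k}. beta_kernel (\<alpha> j) (gam k \<alpha> (\<beta>(k := \<beta> k - 1)) j) (v j) (u j))
      = (\<Prod>j\<in>{1..k}. beta_kernel (\<alpha> j) (gam k \<alpha> \<beta> j - 1) (v j) (u j))" for u
    by (intro prod.cong) (simp_all add: gam_decrease_last_exponent)
  moreover have "(\<integral>\<^sup>+x. h (u_map k (x, v)) * ennreal (simplex_weight k \<alpha> (\<beta>(k := \<beta> k - 1)) x) \<partial>lebk k)
      = (\<integral>\<^sup>+u. h u * ennreal (\<Prod>j\<in>{1..k}. beta_kernel (\<alpha> j) (gam k \<alpha> (\<beta>(k := \<beta> k - 1)) j) (v j) (u j)) \<partial>lebk k)"
    using assms unfolding pos_orthant_def by (intro nn_integral_u_map_simplex_weight) auto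
  ultimately show ?thesis
    unfolding f1_unnorm_eq_simplex_weight by simp
qed

lemma nn_integral_beta_kernel:
  fixes p q :: real
  assumes "p > -1" "q > -1"
  shows "(\<integral>\<^sup>+r. ennreal (beta_kernel p q 1 r) \<partial>lborel) = ennreal (Beta (p + 1) (q + 1))"
proof -
  have "((\<lambda>t. t powr p * (1 - t) powr q) has_integral Beta (p + 1) (q + 1)) {0<..<1}"
    using has_integral_Beta_real[of "p + 1" "q + 1"] assms by (simp add: has_integral_Icc_iff_Ioo)
  from nn_integral_has_integral_lebesgue[OF _ this]
  have "(\<integral>\<^sup>+r. ennreal (indicator {0<..<1} r * (r powr p * (1 - r) powr q)) \<partial>lborel)
      = ennreal (Beta (p + 1) (q + 1))"
    by simp
  moreover have "beta_kernel p q 1 r = indicator {0<..<1} r * (r powr p * (1 - r) powr q)" for r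
    by (simp add: beta_kernel_def)
  ultimately show ?thesis by simp
qed

lemma Beta_gam_pos:
  assumes "\<forall>j\<in>{1..k}. \<alpha> j > -1" and "\<forall>j\<in>{1..k}. gam k \<alpha> \<beta> j > 0" and "j \<in> {1..k}"
  shows "Beta (\<alpha> j + 1) (gam k \<alpha> \<beta> j) > 0"
  using assms unfolding Beta_def by (auto intro!: divide_pos_pos mult_pos_pos Gamma_real_pos) force+

lemma nn_integral_f1_unnorm:
  assumes "\<forall>j\<in>{1..k}. \<alpha> j > -1" and "\<forall>j\<in>{1..k}. gam k \<alpha> \<beta> j > 0"
  shows "(\<integral>\<^sup>+x. ennreal (f1_unnorm k \<alpha> \<beta> x) \<partial>lebk k)
       = ennreal (\<Prod>j\<in>{1..k}. Beta (\<alpha> j + 1) (gam k \<alpha> \<beta> j))"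
proof -
  interpret product_sigma_finite "\<lambda>_::nat. lborel::real measure" by standard
  have "(\<integral>\<^sup>+x. ennreal (f1_unnorm k \<alpha> \<beta> x) \<partial>lebk k)
      = (\<integral>\<^sup>+u. (\<Prod>j\<in>{1..k}. ennreal (beta_kernel (\<alpha> j) (gam k \<alpha> \<beta> j - 1) 1 (u j))) \<partial>lebk k)"
    using nn_integral_u_map_f1_unnorm[of "\<lambda>_. 1" k "\<lambda>_. 1" \<alpha> \<beta>]
    by (simp add: pos_orthant_def prod_ennreal beta_kernel_nonneg)
  also have "\<dots> = (\<Prod>j\<in>{1..k}. \<integral>\<^sup>+r. ennreal (beta_kernel (\<alpha> j) (gam k \<alpha> \<beta> j - 1) 1 r) \<partial>lborel)"
    by (rule product_nn_integral_prod) auto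
  also have "\<dots> = (\<Prod>j\<in>{1..k}. ennreal (Beta (\<alpha> j + 1) (gam k \<alpha> \<beta> j)))"
  proof (intro prod.cong refl)
    fix j assume "j \<in> {1..k}"
    then show "(\<integral>\<^sup>+r. ennreal (beta_kernel (\<alpha> j) (gam k \<alpha> \<beta> j - 1) 1 r) \<partial>lborel)
        = ennreal (Beta (\<alpha> j + 1) (gam k \<alpha> \<beta> j))"
      using assms nn_integral_beta_kernel[of "\<alpha> j" "gam k \<alpha> \<beta> j - 1"] by simp
  qed
  also have "\<dots> = ennreal (\<Prod>j\<in>{1..k}. Beta (\<alpha> j + 1) (gam k \<alpha> \<beta> j))"
    using Beta_gam_pos[OF assms] by (intro prod_ennreal) (simp add: less_imp_le)
  finally show ?thesis .
qed

lemma C1_eq: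
  assumes "\<forall>j\<in>{1..k}. \<alpha> j > -1" and "\<forall>j\<in>{1..k}. gam k \<alpha> \<beta> j > 0"
  shows "C1 k \<alpha> \<beta> = 1 / (\<Prod>j\<in>{1..k}. Beta (\<alpha> j + 1) (gam k \<alpha> \<beta> j))"
proof -
  have "(\<Prod>j\<in>{1..k}. Beta (\<alpha> j + 1) (gam k \<alpha> \<beta> j)) \<ge> 0"
    using Beta_gam_pos[OF assms] by (intro prod_nonneg) (simp add: less_imp_le)
  moreover have "(\<integral>x. f1_unnorm k \<alpha> \<beta> x \<partial>lebk k) = enn2real (\<integral>\<^sup>+x. ennreal (f1_unnorm k \<alpha> \<beta> x) \<partial>lebk k)"
    by (rule integral_eq_nn_integral[OF f1_unnorm_measurable]) (simp add: f1_unnorm_nonneg)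
  ultimately show ?thesis
    unfolding C1_def nn_integral_f1_unnorm[OF assms] by simp
qed

lemma C1_nonneg: "C1 k \<alpha> \<beta> \<ge> 0"
  unfolding C1_def by (simp add: integral_nonneg_AE f1_unnorm_nonneg)

section \<open>The density of u and the Kober operator\<close>

lemma nn_integral_u_map_f1_dens:
  fixes h :: "(nat \<Rightarrow> real) \<Rightarrow> ennreal"
  assumes "v \<in> pos_orthant k" and [measurable]: "h \<in> borel_measurable (lebk k)" and c: "c \<ge> 0"
  shows "(\<integral>\<^sup>+x. ennreal (f1_dens k \<alpha> \<beta> x * c) * h (u_map k (x, v)) \<partial>lebk k)
       = (\<integral>\<^sup>+u. ennreal (C1 k \<alpha> \<beta> * c *
            (\<Prod>j\<in>{1..k}. beta_kernel (\<alpha> j) (gam k \<alpha> \<beta> j - 1) (v j) (u j))) * h u \<partial>lebk k)"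
proof -
  let ?Q = "\<lambda>u. \<Prod>j\<in>{1..k}. beta_kernel (\<alpha> j) (gam k \<alpha> \<beta> j - 1) (v j) (u j)"
  have "(\<integral>\<^sup>+x. ennreal (f1_dens k \<alpha> \<beta> x * c) * h (u_map k (x, v)) \<partial>lebk k)
      = (\<integral>\<^sup>+x. (ennreal (C1 k \<alpha> \<beta> * c) * h (u_map k (x, v))) * ennreal (f1_unnorm k \<alpha> \<beta> x) \<partial>lebk k)"
  proof (intro nn_integral_cong)
    fix x
    have "ennreal (f1_dens k \<alpha> \<beta> x * c) = ennreal (C1 k \<alpha> \<beta> * c) * ennreal (f1_unnorm k \<alpha> \<beta> x)"
      unfolding f1_dens_def using C1_nonneg c f1_unnorm_nonneg
      by (subst ennreal_mult[symmetric]) (auto simp: mult_ac)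
    then show "ennreal (f1_dens k \<alpha> \<beta> x * c) * h (u_map k (x, v))
        = ennreal (C1 k \<alpha> \<beta> * c) * h (u_map k (x, v)) * ennreal (f1_unnorm k \<alpha> \<beta> x)"
      by (simp add: mult_ac)
  qed
  also have "\<dots> = (\<integral>\<^sup>+u. (ennreal (C1 k \<alpha> \<beta> * c) * h u) * ennreal (?Q u) \<partial>lebk k)"
    by (rule nn_integral_u_map_f1_unnorm[OF assms(1)]) measurable
  also have "\<dots> = (\<integral>\<^sup>+u. ennreal (C1 k \<alpha> \<beta> * c * ?Q u) * h u \<partial>lebk k)"
    using C1_nonneg c by (intro nn_integral_cong) (simp add: ennreal_mult'[symmetric] mult_ac)
  finally show ?thesis .
qed

text \<open>Given v, the u_j are independent with densities beta_kernel (alpha_j) (gamma_j - 1) (v_j).\<close>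

definition u_density ::
    "nat \<Rightarrow> (nat \<Rightarrow> real) \<Rightarrow> (nat \<Rightarrow> real) \<Rightarrow> ((nat \<Rightarrow> real) \<Rightarrow> real) \<Rightarrow> (nat \<Rightarrow> real) \<Rightarrow> ennreal" where
  "u_density k \<alpha> \<beta> f u = (\<integral>\<^sup>+v. ennreal (C1 k \<alpha> \<beta> * f v *
       (\<Prod>j\<in>{1..k}. beta_kernel (\<alpha> j) (gam k \<alpha> \<beta> j - 1) (v j) (u j))) \<partial>lebk k)"

lemma u_density_integrand_measurable[measurable]:
  assumes "f \<in> borel_measurable (lebk k)"
  shows "(\<lambda>(u, v). ennreal (C1 k \<alpha> \<beta> * f v *
      (\<Prod>j\<in>{1..k}. beta_kernel (\<alpha> j) (gam k \<alpha> \<beta> j - 1) (v j) (u j)))) \<in> borel_measurable (lebk k \<Otimes>\<^sub>M lebk k)"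
proof -
  have "(\<lambda>p. \<Prod>j\<in>{1..k}. beta_kernel (\<alpha> j) (gam k \<alpha> \<beta> j - 1) (snd p j) (fst p j))
      \<in> borel_measurable (lebk k \<Otimes>\<^sub>M lebk k)"
    by (intro borel_measurable_prod beta_kernel_measurable_pair lebk_pair_component_measurable) auto
  then show ?thesis
    using assms by (simp add: split_beta') measurable
qed

lemma sigma_finite_lebk: "sigma_finite_measure (lebk n)"
proof -
  interpret finite_product_sigma_finite "\<lambda>_. lborel :: real measure" "{1..n}"
    by standard auto
  show ?thesis by (rule sigma_finite_measure_axioms)
qed

lemma u_density_measurable[measurable]:
  "f \<in> borel_measurable (lebk k) \<Longrightarrow> u_density k \<alpha> \<beta> f \<in> borel_measurable (lebk k)"
  unfolding u_density_def
  by (rule sigma_finite_measure.borel_measurable_nn_integral[OF sigma_finite_lebk])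
     (rule u_density_integrand_measurable)

lemma distr_u_map_eq_density:
  assumes f[measurable]: "f \<in> borel_measurable (lebk k)" and f_nonneg: "\<forall>v. f v \<ge> 0"
    and f_supp: "\<forall>v. v \<notin> pos_orthant k \<longrightarrow> f v = 0"
  shows "distr (density (lebk k \<Otimes>\<^sub>M lebk k) (\<lambda>(x, v). ennreal (f1_dens k \<alpha> \<beta> x * f v)))
           (lebk k) (u_map k) = density (lebk k) (u_density k \<alpha> \<beta> f)"
proof (rule measure_eqI)
  interpret PP: pair_sigma_finite "lebk k" "lebk k"
    by (intro pair_sigma_finite.intro sigma_finite_lebk)
  let ?C = "C1 k \<alpha> \<beta>"
  let ?Q = "\<lambda>u v. \<Prod>j\<in>{1..k}. beta_kernel (\<alpha> j) (gam k \<alpha> \<beta> j - 1) (v j) (u j)"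
  let ?D = "\<lambda>u v. ennreal (?C * f v * ?Q u v)"
  fix A assume "A \<in> sets (distr (density (lebk k \<Otimes>\<^sub>M lebk k)
      (\<lambda>(x, v). ennreal (f1_dens k \<alpha> \<beta> x * f v))) (lebk k) (u_map k))"
  then have A[measurable]: "A \<in> sets (lebk k)" by simp
  have inner: "(\<integral>\<^sup>+x. ennreal (f1_dens k \<alpha> \<beta> x * f v) * indicator A (u_map k (x, v)) \<partial>lebk k)
      = (\<integral>\<^sup>+u. ?D u v * indicator A u \<partial>lebk k)" for v
  proof (cases "v \<in> pos_orthant k")
    case True
    show ?thesis
      by (rule nn_integral_u_map_f1_dens[OF True borel_measurable_indicator[OF A]]) (use f_nonneg in simp)
  qed (simp add: f_supp)
  have "emeasure (distr (density (lebk k \<Otimes>\<^sub>M lebk k) (\<lambda>(x, v). ennreal (f1_dens k \<alpha> \<beta> x * f v)))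
      (lebk k) (u_map k)) A
      = emeasure (density (lebk k \<Otimes>\<^sub>M lebk k) (\<lambda>(x, v). ennreal (f1_dens k \<alpha> \<beta> x * f v)))
          (u_map k -` A \<inter> space (lebk k \<Otimes>\<^sub>M lebk k))"
    using measurable_u_map[of k] A by (subst emeasure_distr) simp_all
  also have "\<dots> = (\<integral>\<^sup>+p. ennreal (f1_dens k \<alpha> \<beta> (fst p) * f (snd p)) * indicator A (u_map k p) \<partial>(lebk k \<Otimes>\<^sub>M lebk k))"
  proof -
    have "(\<lambda>(x, v). ennreal (f1_dens k \<alpha> \<beta> x * f v)) \<in> borel_measurable (lebk k \<Otimes>\<^sub>M lebk k)"
      unfolding f1_dens_def by measurable
    moreover have "u_map k -` A \<inter> space (lebk k \<Otimes>\<^sub>M lebk k) \<in> sets (lebk k \<Otimes>\<^sub>M lebk k)"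
      by measurable
    ultimately show ?thesis
      by (subst emeasure_density) (auto simp: split_beta' indicator_def intro!: nn_integral_cong)
  qed
  also have "\<dots> = (\<integral>\<^sup>+v. \<integral>\<^sup>+x. ennreal (f1_dens k \<alpha> \<beta> x * f v) * indicator A (u_map k (x, v)) \<partial>lebk k \<partial>lebk k)"
  proof -
    have "(\<lambda>p. ennreal (f1_dens k \<alpha> \<beta> (fst p) * f (snd p)) * indicator A (u_map k p))
        \<in> borel_measurable (lebk k \<Otimes>\<^sub>M lebk k)"
      unfolding f1_dens_def by measurable
    from PP.nn_integral_snd[OF this] show ?thesis by simp
  qed
  also have "\<dots> = (\<integral>\<^sup>+v. \<integral>\<^sup>+u. ?D u v * indicator A u \<partial>lebk k \<partial>lebk k)"
    by (simp only: inner)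
  also have "\<dots> = (\<integral>\<^sup>+u. \<integral>\<^sup>+v. ?D u v * indicator A u \<partial>lebk k \<partial>lebk k)"
    by (rule PP.Fubini') measurable
  also have "\<dots> = (\<integral>\<^sup>+u. u_density k \<alpha> \<beta> f u * indicator A u \<partial>lebk k)"
    unfolding u_density_def by (intro nn_integral_cong nn_integral_multc) measurable
  also have "\<dots> = emeasure (density (lebk k) (u_density k \<alpha> \<beta> f)) A"
    by (rule emeasure_density[symmetric]) measurable
  finally show "emeasure (distr (density (lebk k \<Otimes>\<^sub>M lebk k)
      (\<lambda>(x, v). ennreal (f1_dens k \<alpha> \<beta> x * f v))) (lebk k) (u_map k)) A
      = emeasure (density (lebk k) (u_density k \<alpha> \<beta> f)) A" .
qed simp

lemma beta_kernel_eq_kober_factor: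
  assumes "r > 0"
  shows "beta_kernel p (g - 1) c r = (if r < c then r powr p * ((c - r) powr (g - 1) * c powr (- p - g)) else 0)"
proof (cases "r < c")
  case True
  have c: "c > 0" using assms True by simp
  have "1 - r / c = (c - r) / c" using c by (simp add: field_simps)
  moreover have "c powr (- p - g) = inverse (c powr p * c powr (g - 1) * c)"
  proof -
    have "- p - g = - (p + (g - 1) + 1)" by simp
    then show ?thesis using c by (simp only: powr_minus powr_add powr_one)
  qed
  ultimately show ?thesis
    using True assms c unfolding beta_kernel_def by (simp add: powr_divide field_simps)
qed (simp add: beta_kernel_def)

lemma prod_beta_kernel_eq_kober_kernel:
  assumes "u \<in> pos_orthant k"
  shows "(\<Prod>j\<in>{1..k}. beta_kernel (a j) (g j - 1) (v j) (u j))
       = (\<Prod>j\<in>{1..k}. u j powr a j) * (indicator {v. \<forall>j\<in>{1..k}. v j > u j} v *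
           (\<Prod>j\<in>{1..k}. (v j - u j) powr (g j - 1) * v j powr (- a j - g j)))"
proof -
  have "(\<Prod>j\<in>{1..k}. beta_kernel (a j) (g j - 1) (v j) (u j))
      = (\<Prod>j\<in>{1..k}. if u j < v j then u j powr a j * ((v j - u j) powr (g j - 1) * v j powr (- a j - g j)) else 0)"
    using assms unfolding pos_orthant_def by (intro prod.cong refl beta_kernel_eq_kober_factor) auto
  then show ?thesis
    by (cases "\<forall>j\<in>{1..k}. v j > u j") (auto simp: prod.distrib prod_zero_iff)
qed

lemma kober_integrand_measurable:
  assumes "f \<in> borel_measurable (lebk k)"
  shows "(\<lambda>v. indicator {v. \<forall>j\<in>{1..k}. v j > u j} v *
            (\<Prod>j\<in>{1..k}. (v j - u j) powr (g j - 1) * v j powr (- a j - g j)) * f v)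
         \<in> borel_measurable (lebk k)"
proof -
  have "Measurable.pred (lebk k) (\<lambda>v. \<forall>j\<in>{1..k}. u j < v j)"
    by (intro pred_intros_finite) (auto intro!: measurable_compose[OF lebk_component_measurable])
  then have "(\<lambda>v. indicator {v. \<forall>j\<in>{1..k}. v j > u j} v :: real) \<in> borel_measurable (lebk k)"
    by (simp add: pred_def)
  then show ?thesis
    using assms
    by (intro borel_measurable_times borel_measurable_prod
        measurable_compose[OF lebk_component_measurable, where g = "\<lambda>x. (x - _) powr _ * x powr _"]) auto
qed

lemma Gamma_div_Beta:
  fixes a b :: real
  assumes "a > 0" "b > 0"
  shows "Gamma a / Gamma (a + b) / Beta a b = 1 / Gamma b"
  using assms by (simp add: Beta_def Gamma_real_pos field_simps less_imp_neq[symmetric])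

lemma prod_Gamma_ratio_mult_C1:
  assumes \<alpha>: "\<forall>j\<in>{1..k}. \<alpha> j > -1" and \<gamma>: "\<forall>j\<in>{1..k}. gam k \<alpha> \<beta> j > 0"
  shows "(\<Prod>j\<in>{1..k}. Gamma (\<alpha> j + 1) / Gamma (\<alpha> j + gam k \<alpha> \<beta> j + 1)) * C1 k \<alpha> \<beta>
       = (\<Prod>j\<in>{1..k}. 1 / Gamma (gam k \<alpha> \<beta> j))"
proof -
  let ?\<gamma> = "gam k \<alpha> \<beta>"
  have "(\<Prod>j\<in>{1..k}. Gamma (\<alpha> j + 1) / Gamma (\<alpha> j + ?\<gamma> j + 1)) * C1 k \<alpha> \<beta>
      = (\<Prod>j\<in>{1..k}. Gamma (\<alpha> j + 1) / Gamma (\<alpha> j + ?\<gamma> j + 1) / Beta (\<alpha> j + 1) (?\<gamma> j))"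
    unfolding C1_eq[OF \<alpha> \<gamma>] by (simp add: prod_dividef prod.distrib)
  also have "\<dots> = (\<Prod>j\<in>{1..k}. 1 / Gamma (?\<gamma> j))"
    using \<alpha> \<gamma> Gamma_div_Beta[of "\<alpha> _ + 1" "?\<gamma> _"] by (intro prod.cong refl) (force simp: add_ac)
  finally show ?thesis .
qed

lemma u_density_eq_kober:
  assumes \<alpha>: "\<forall>j\<in>{1..k}. \<alpha> j > -1" and \<gamma>: "\<forall>j\<in>{1..k}. gam k \<alpha> \<beta> j > 0"
    and f: "f \<in> borel_measurable (lebk k)" "\<forall>v. f v \<ge> 0" and u: "u \<in> pos_orthant k"
  shows "(\<Prod>j\<in>{1..k}. Gamma (\<alpha> j + 1) / Gamma (\<alpha> j + gam k \<alpha> \<beta> j + 1)) *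
           enn2real (u_density k \<alpha> \<beta> f u) = kober2 k \<alpha> (gam k \<alpha> \<beta>) f u"
proof -
  let ?\<gamma> = "gam k \<alpha> \<beta>"
  define K where "K v = indicator {v. \<forall>j\<in>{1..k}. v j > u j} v *
      (\<Prod>j\<in>{1..k}. (v j - u j) powr (?\<gamma> j - 1) * v j powr (- \<alpha> j - ?\<gamma> j)) * f v" for v
  define c where "c = C1 k \<alpha> \<beta> * (\<Prod>j\<in>{1..k}. u j powr \<alpha> j)"
  have K: "K v \<ge> 0" for v
    unfolding K_def using f(2) by (intro mult_nonneg_nonneg prod_nonneg) auto
  have c: "c \<ge> 0"
    unfolding c_def using C1_nonneg by (intro mult_nonneg_nonneg prod_nonneg) auto
  have Km: "K \<in> borel_measurable (lebk k)"
    unfolding K_def by (rule kober_integrand_measurable[OF f(1)])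
  have "u_density k \<alpha> \<beta> f u = (\<integral>\<^sup>+v. ennreal c * ennreal (K v) \<partial>lebk k)"
    unfolding u_density_def prod_beta_kernel_eq_kober_kernel[OF u]
    using c K by (intro nn_integral_cong) (simp add: c_def K_def ennreal_mult'[symmetric] mult_ac)
  also have "\<dots> = ennreal c * (\<integral>\<^sup>+v. ennreal (K v) \<partial>lebk k)"
    using Km by (intro nn_integral_cmult) simp
  finally have "enn2real (u_density k \<alpha> \<beta> f u) = c * enn2real (\<integral>\<^sup>+v. ennreal (K v) \<partial>lebk k)"
    using c by (simp add: enn2real_mult)
  also have "\<dots> = c * (\<integral>v. K v \<partial>lebk k)"
    using integral_eq_nn_integral[OF Km] K by simp
  finally have u_density: "enn2real (u_density k \<alpha> \<beta> f u) = c * (\<integral>v. K v \<partial>lebk k)" .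
  have Gamma_c: "(\<Prod>j\<in>{1..k}. Gamma (\<alpha> j + 1) / Gamma (\<alpha> j + ?\<gamma> j + 1)) * c
      = (\<Prod>j\<in>{1..k}. u j powr \<alpha> j / Gamma (?\<gamma> j))"
    unfolding c_def mult.assoc[symmetric] prod_Gamma_ratio_mult_C1[OF \<alpha> \<gamma>]
    by (simp add: prod_dividef)
  show ?thesis
    unfolding u_density mult.assoc[symmetric] Gamma_c kober2_def K_def ..
qed

theorem theorem1p3:
  fixes k :: nat and \<alpha> \<beta> :: "nat \<Rightarrow> real"
    and f g :: "(nat \<Rightarrow> real) \<Rightarrow> real"
  assumes "k \<ge> 1"
    and "\<forall>j\<in>{1..k}. \<alpha> j > -1"
    and "\<forall>j\<in>{1..k}. gam k \<alpha> \<beta> j > 0"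
    and f_meas: "f \<in> borel_measurable (lebk k)"
    and f_nonneg: "\<forall>v. f v \<ge> 0"
    and f_supp: "\<forall>v. v \<notin> pos_orthant k \<longrightarrow> f v = 0"
    and f_prob: "(\<integral>\<^sup>+ v. ennreal (f v) \<partial>lebk k) = 1"
    and g_meas: "g \<in> borel_measurable (lebk k)"
    and g_nonneg: "\<forall>u. g u \<ge> 0"
    and g_dens: "distr (density (lebk k \<Otimes>\<^sub>M lebk k)
                          (\<lambda>(x, v). ennreal (f1_dens k \<alpha> \<beta> x * f v)))
                       (lebk k) (u_map k)
                 = density (lebk k) (\<lambda>u. ennreal (g u))"
  shows "AE u in lebk k. u \<in> pos_orthant k \<longrightarrow>
           (\<Prod>j\<in>{1..k}. Gamma (\<alpha> j + 1) / Gamma (\<alpha> j + gam k \<alpha> \<beta> j + 1)) * g u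
             = kober2 k \<alpha> (gam k \<alpha> \<beta>) f u"
proof -
  have "density (lebk k) (\<lambda>u. ennreal (g u)) = density (lebk k) (u_density k \<alpha> \<beta> f)"
    using distr_u_map_eq_density[OF f_meas f_nonneg f_supp] g_dens by simp
  then have "AE u in lebk k. ennreal (g u) = u_density k \<alpha> \<beta> f u"
    by (rule sigma_finite_measure.density_unique[OF sigma_finite_lebk
          measurable_compose[OF g_meas measurable_ennreal] u_density_measurable[OF f_meas]])
  then show ?thesis
  proof (rule AE_mp, intro AE_I2 impI)
    fix u assume "ennreal (g u) = u_density k \<alpha> \<beta> f u" and "u \<in> pos_orthant k"
    moreover have "g u = enn2real (ennreal (g u))"
      using g_nonneg by simp
    ultimately show "(\<Prod>j\<in>{1..k}. Gamma (\<alpha> j + 1) / Gamma (\<alpha> j + gam k \<alpha> \<beta> j + 1)) * g u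
        = kober2 k \<alpha> (gam k \<alpha> \<beta>) f u"
      using u_density_eq_kober assms(2,3) f_meas f_nonneg by simp
  qed
qed

end
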